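(* Let $n$ be a positive integer and $j$ a non-negative integer. Then $$\binom{2j}{j}\sum_{k=j}^{n-1}(4k+3)\binom{k}{j}^2\equiv 0\pmod n.$$
   Context: An empty sum (when $j>n-1$) is zero. *)

theory Defs
  imports Main
begin

end

theory Submission
  imports Defs
begin

text \<open>Since 4k + 3 = 2(2k + 1) + 1 and the sum of (2k + 1 - j) C(k,j)^2 over k < n telescopes
  to (j + 1) C(n,j+1)^2, which is a multiple of n, it suffices that n divides
  (2j + 1) C(2j,j) times the sum of C(k,j)^2 over k < n. Expanding
  C(k,j)^2 = sum_i C(j,i) C(j+i,i) C(k,j+i) and summing over k turns this into a combination of the
  C(n,j+i+1); the coefficient (2j + 1) C(2j,j) C(j,i) C(j+i,i) equals (j+i+1) C(2j+1,j-i) C(j+i,i)^2,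
  and (j+i+1) C(n,j+i+1) = n C(n-1,j+i).\<close>

lemma Suc_times_binomial_Suc: "Suc m * (n choose Suc m) = (n - m) * (n choose m)"
proof (cases n)
  case 0
  then show ?thesis by simp
next
  case (Suc n')
  then show ?thesis
    using Suc_times_binomial[of m n'] binomial_absorb_comp[of n m] by simp
qed

text \<open>The telescoping step, with (2k + 1 - j) C(k,j)^2 split so that no subtraction occurs.\<close>

lemma binomial_square_step:
  "(2 * k + 1) * (k choose j)^2 + Suc j * (k choose Suc j)^2
     = j * (k choose j)^2 + Suc j * (Suc k choose Suc j)^2"
proof (cases "j \<le> k")
  case False
  then show ?thesis by (simp add: binomial_eq_0)
next
  case True
  let ?x = "k choose j" and ?y = "k choose Suc j"
  have "(2 * k + 1) * ?x = (2 * j + 1) * ?x + 2 * ((k - j) * ?x)"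
    using True by (simp add: algebra_simps diff_mult_distrib)
  also have "\<dots> = (2 * j + 1) * ?x + 2 * (Suc j * ?y)"
    by (simp only: Suc_times_binomial_Suc)
  finally have "(2 * k + 1) * ?x * ?x = ((2 * j + 1) * ?x + 2 * (Suc j * ?y)) * ?x"
    by simp
  then show ?thesis
    by (simp add: power2_eq_square algebra_simps)
qed

lemma sum_odd_times_binomial_square:
  "(\<Sum>k<n. (2 * k + 1) * (k choose j)^2)
     = j * (\<Sum>k<n. (k choose j)^2) + Suc j * (n choose Suc j)^2"
proof (induction n)
  case 0
  then show ?case by simp
next
  case (Suc n)
  then show ?case
    using binomial_square_step[of n j] by (simp add: algebra_simps del: binomial_Suc_Suc)
qed

lemma binomial_square_eq_sum:
  "(k choose j)^2 = (\<Sum>i\<le>j. (j choose i) * ((j + i) choose i) * (k choose (j + i)))"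
proof (cases "j \<le> k")
  case False
  then show ?thesis by (simp add: power2_eq_square binomial_eq_0)
next
  case True
  have vandermonde': "(\<Sum>i\<le>j. ((k - j) choose i) * (j choose i)) = k choose j"
    using vandermonde[of "k - j" j j] True
    by (metis (no_types, lifting) binomial_symmetric le_add_diff_inverse2 atMost_iff sum.cong)
  have subset: "(k choose j) * ((k - j) choose i) = (k choose (j + i)) * ((j + i) choose i)" for i
  proof (cases "j + i \<le> k")
    case True
    then show ?thesis using choose_mult[of j "j + i" k] binomial_symmetric[of i "j + i"] by simp
  next
    case False
    then show ?thesis using \<open>j \<le> k\<close> by (simp add: binomial_eq_0)
  qed
  have "(k choose j)^2 = (k choose j) * (\<Sum>i\<le>j. ((k - j) choose i) * (j choose i))"
    using vandermonde' by (simp add: power2_eq_square)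
  also have "\<dots> = (\<Sum>i\<le>j. (j choose i) * ((k choose j) * ((k - j) choose i)))"
    by (simp add: sum_distrib_left algebra_simps)
  also have "\<dots> = (\<Sum>i\<le>j. (j choose i) * ((j + i) choose i) * (k choose (j + i)))"
    by (simp add: subset algebra_simps)
  finally show ?thesis .
qed

lemma sum_lessThan_choose: "(\<Sum>k<n. k choose m) = n choose Suc m"
  by (cases n) (simp_all add: lessThan_Suc_atMost sum_choose_upper del: sum.lessThan_Suc)

lemma sum_binomial_square:
  "(\<Sum>k<n. (k choose j)^2)
     = (\<Sum>i\<le>j. (j choose i) * ((j + i) choose i) * (n choose Suc (j + i)))"
proof -
  have "(\<Sum>k<n. (k choose j)^2)
      = (\<Sum>i\<le>j. (j choose i) * ((j + i) choose i) * (\<Sum>k<n. k choose (j + i)))"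
    by (simp add: binomial_square_eq_sum sum_distrib_left sum.swap[of _ "{..<n}"])
  then show ?thesis by (simp add: sum_lessThan_choose)
qed

lemma dvd_mult_binomial:
  assumes "Suc m dvd c"
  shows "n dvd c * (n choose Suc m)"
proof (cases n)
  case 0
  then show ?thesis by simp
next
  case (Suc n')
  obtain q where c: "c = Suc m * q" using assms by blast
  have "c * (n choose Suc m) = q * (Suc m * (Suc n' choose Suc m))"
    by (metis c Suc mult.assoc mult.commute)
  also have "\<dots> = n * (q * (n' choose m))"
    by (simp only: Suc_times_binomial Suc mult.left_commute)
  finally show ?thesis by simp
qed

lemma Suc_add_dvd_central_binomial:
  "Suc (j + i) dvd (2 * j + 1) * ((2 * j) choose j) * (j choose i) * ((j + i) choose i)"
proof (cases "i \<le> j")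
  case False
  then show ?thesis by (simp add: binomial_eq_0)
next
  case True
  have central: "(2 * j + 1) * ((2 * j) choose j) = Suc j * ((2 * j + 1) choose j)"
    using Suc_times_binomial[of j "2 * j"] binomial_symmetric[of j "2 * j + 1"] by simp
  have subset: "((2 * j + 1) choose j) * (j choose i) = ((2 * j + 1) choose (j - i)) * (Suc (j + i) choose i)"
    using choose_mult[of "j - i" j "2 * j + 1"] binomial_symmetric[OF True] True by simp
  have absorb: "Suc j * (Suc (j + i) choose i) = Suc (j + i) * ((j + i) choose i)"
    using Suc_times_binomial_add[of i j] Suc_times_binomial[of i "i + j"] by (simp add: add.commute)
  have "(2 * j + 1) * ((2 * j) choose j) * (j choose i) * ((j + i) choose i)
      = ((2 * j + 1) choose (j - i)) * (Suc j * (Suc (j + i) choose i)) * ((j + i) choose i)"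
    by (simp only: central subset mult.assoc mult.left_commute)
  also have "\<dots> = Suc (j + i) * (((2 * j + 1) choose (j - i)) * ((j + i) choose i)^2)"
    by (simp only: absorb power2_eq_square mult.assoc mult.left_commute)
  finally show ?thesis by (metis dvd_triv_left)
qed

lemma dvd_central_binomial_sum_binomial_square:
  "n dvd (2 * j + 1) * ((2 * j) choose j) * (\<Sum>k<n. (k choose j)^2)"
proof -
  have "(2 * j + 1) * ((2 * j) choose j) * (\<Sum>k<n. (k choose j)^2)
      = (\<Sum>i\<le>j. ((2 * j + 1) * ((2 * j) choose j) * (j choose i) * ((j + i) choose i))
                 * (n choose Suc (j + i)))"
    by (simp add: sum_binomial_square sum_distrib_left mult.assoc)
  also have "n dvd \<dots>"
    by (intro dvd_sum dvd_mult_binomial Suc_add_dvd_central_binomial)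
  finally show ?thesis .
qed

theorem mainTheorem10:
  fixes n j :: nat
  assumes "n > 0"
  shows "n dvd ((2 * j) choose j) * (\<Sum>k = j..n - 1. (4 * k + 3) * (k choose j)^2)"
proof -
  let ?S = "\<Sum>k<n. (k choose j)^2" and ?b = "n choose Suc j"
  have "(\<Sum>k = j..n - 1. (4 * k + 3) * (k choose j)^2) = (\<Sum>k<n. (4 * k + 3) * (k choose j)^2)"
    using assms by (intro sum.mono_neutral_left) (auto simp: binomial_eq_0)
  also have "\<dots> = 2 * (\<Sum>k<n. (2 * k + 1) * (k choose j)^2) + ?S"
    by (simp add: sum_distrib_left sum.distrib[symmetric] algebra_simps)
  also have "\<dots> = (2 * j + 1) * ?S + 2 * ?b * (Suc j * ?b)"
    unfolding sum_odd_times_binomial_square by (simp add: power2_eq_square algebra_simps)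
  finally have "((2 * j) choose j) * (\<Sum>k = j..n - 1. (4 * k + 3) * (k choose j)^2)
      = (2 * j + 1) * ((2 * j) choose j) * ?S + 2 * ((2 * j) choose j) * ?b * (Suc j * ?b)"
    by (simp add: algebra_simps)
  moreover have "n dvd Suc j * ?b"
    by (rule dvd_mult_binomial) simp
  ultimately show ?thesis
    using dvd_central_binomial_sum_binomial_square[of n j] by simp
qed

end
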